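(* Let $f\colon[0,1]\to\mathbb{R}_{\ge 0}$ be Riemann-integrable, let $\delta\in(0,1)$ and $0<\beta<\alpha\le 1$. Assume $\int_0^1(1-\theta^\alpha) f(\theta)\,\mathrm{d}\theta>0$. Then $$\frac{\int_0^\delta (1-\theta^\alpha) f(\theta)\,\mathrm{d}\theta}{\int_0^1 (1-\theta^\alpha) f(\theta)\,\mathrm{d}\theta}\ \le\ \frac{\int_0^\delta (1-\theta^\beta) f(\theta)\,\mathrm{d}\theta}{\int_0^1 (1-\theta^\beta) f(\theta)\,\mathrm{d}\theta}.$$ *)

theory Defs
  imports "HOL-Analysis.Analysis"
begin

definition riemann_integrable_on :: "(real \<Rightarrow> real) \<Rightarrow> real \<Rightarrow> real \<Rightarrow> bool" where
  "riemann_integrable_on f a b \<longleftrightarrow>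
     (\<exists>I. \<forall>\<epsilon>>0. \<exists>d>0. \<forall>(n::nat) (x::nat \<Rightarrow> real) (t::nat \<Rightarrow> real).
        (n > 0 \<and> x 0 = a \<and> x n = b \<and>
         (\<forall>i<n. x i < x (Suc i) \<and> x (Suc i) - x i < d \<and> x i \<le> t i \<and> t i \<le> x (Suc i)))
        \<longrightarrow> \<bar>(\<Sum>i<n. f (t i) * (x (Suc i) - x i)) - I\<bar> < \<epsilon>)"

end

theory Submission
  imports Defs
begin

text \<open>The ratio \<open>(1 - \<theta> powr \<beta>) / (1 - \<theta> powr \<alpha>)\<close> is nonincreasing on \<open>[0,1)\<close>: after
substituting \<open>t = \<theta> powr \<alpha>\<close> it becomes the slope of the chord of the concave function
\<open>t powr (\<beta>/\<alpha>)\<close> from \<open>t\<close> to \<open>1\<close>. So the weight \<open>(1 - \<theta> powr \<beta>) f \<theta>\<close> lies above a fixed multiple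
of \<open>(1 - \<theta> powr \<alpha>) f \<theta>\<close> on \<open>[0,\<delta>]\<close> and below it on \<open>[\<delta>,1]\<close>, and such a single crossing can
only increase the share of the total mass that sits on \<open>[0,\<delta>]\<close>.\<close>

lemma powr_le_tangent_line:
  fixes w v r :: real
  assumes "0 \<le> w" "0 < v" "0 \<le> r" "r \<le> 1"
  shows "w powr r \<le> v powr r + r * v powr (r - 1) * (w - v)"
proof (cases "w = 0")
  case True
  have "v * v powr (r - 1) = v powr r"
    using powr_add[of v 1 "r - 1"] assms by simp
  moreover have "0 \<le> (1 - r) * v powr r" using assms by simp
  ultimately show ?thesis using True by (simp add: algebra_simps)
next
  case False
  then have "w powr r * v powr (1 - r) \<le> r * w + (1 - r) * v"
    using assms by (intro Youngs_inequality_0) auto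
  then have "(w powr r * v powr (1 - r)) * v powr (r - 1) \<le> (r * w + (1 - r) * v) * v powr (r - 1)"
    by (rule mult_right_mono) simp
  moreover have "v powr (1 - r) * v powr (r - 1) = 1" "v * v powr (r - 1) = v powr r"
    using powr_add[of v "1 - r" "r - 1"] powr_add[of v 1 "r - 1"] assms by simp_all
  ultimately show ?thesis by (simp add: algebra_simps)
qed

text \<open>Cross-multiplied form of the monotonicity of the chord slope \<open>(1 - t powr r) / (1 - t)\<close>.\<close>

lemma one_minus_powr_chord_cross_le:
  fixes u v r :: real
  assumes "0 \<le> u" "u \<le> v" "v \<le> 1" "0 < r" "r \<le> 1"
  shows "(1 - v powr r) * (1 - u) \<le> (1 - u powr r) * (1 - v)"
proof (cases "v = 0 \<or> v = 1")
  case True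
  then show ?thesis using assms by auto
next
  case False
  then have v: "0 < v" "v < 1" using assms by auto
  define s where "s = r * v powr (r - 1)"
  have "s * v = r * v powr r"
    using powr_add[of v 1 "r - 1"] v by (simp add: s_def algebra_simps)
  moreover have "1 \<le> v powr r + s * (1 - v)" "u powr r \<le> v powr r + s * (u - v)"
    using powr_le_tangent_line[of 1 v r] powr_le_tangent_line[of u v r] assms v
    by (simp_all add: s_def)
  ultimately have slope: "1 - v powr r \<le> s * (1 - v)"
    and u_side: "(1 - v powr r) + s * (v - u) \<le> 1 - u powr r"
    by (simp_all add: algebra_simps)
  have "(1 - v powr r) * (1 - u) = (1 - v powr r) * (1 - v) + (1 - v powr r) * (v - u)"
    by (simp add: algebra_simps)
  also have "\<dots> \<le> (1 - v powr r) * (1 - v) + (s * (1 - v)) * (v - u)"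
    using slope assms by (intro add_left_mono mult_right_mono) auto
  also have "\<dots> = ((1 - v powr r) + s * (v - u)) * (1 - v)"
    by (simp add: algebra_simps)
  also have "\<dots> \<le> (1 - u powr r) * (1 - v)"
    using u_side v by (intro mult_right_mono) auto
  finally show ?thesis .
qed

lemma one_minus_powr_ratio_cross_le:
  fixes x y \<alpha> \<beta> :: real
  assumes "0 \<le> x" "x \<le> y" "y \<le> 1" "0 < \<beta>" "\<beta> \<le> \<alpha>"
  shows "(1 - y powr \<beta>) * (1 - x powr \<alpha>) \<le> (1 - x powr \<beta>) * (1 - y powr \<alpha>)"
proof -
  have "0 < \<alpha>" using assms by simp
  then have "(1 - (y powr \<alpha>) powr (\<beta> / \<alpha>)) * (1 - x powr \<alpha>)
      \<le> (1 - (x powr \<alpha>) powr (\<beta> / \<alpha>)) * (1 - y powr \<alpha>)"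
    using assms by (intro one_minus_powr_chord_cross_le powr_mono2 powr_le1) auto
  then show ?thesis
    using \<open>0 < \<alpha>\<close> by (simp add: powr_powr)
qed

lemma share_le_of_single_crossing:
  fixes Ad Ar Bd Br p q :: real
  assumes "0 \<le> Ad" "0 \<le> Ar" "0 \<le> Bd" "0 \<le> Br" "0 < p" "0 < q"
    and "p * Ad \<le> q * Bd" "q * Br \<le> p * Ar"
  shows "Ad / (Ad + Ar) \<le> Bd / (Bd + Br)"
proof (cases "Ad = 0")
  case True
  then show ?thesis using assms by simp
next
  case False
  then have "0 < p * Ad" using assms by simp
  then have "0 < q * Bd" using assms(7) by linarith
  then have "0 < Bd" using assms(6) by (simp add: zero_less_mult_iff)
  have "q * (Ad * Br) \<le> q * (Bd * Ar)"
  proof -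
    have "q * (Ad * Br) = Ad * (q * Br)" by simp
    also have "\<dots> \<le> Ad * (p * Ar)" using assms(8,1) by (rule mult_left_mono)
    also have "\<dots> = (p * Ad) * Ar" by simp
    also have "\<dots> \<le> (q * Bd) * Ar" using assms(7,2) by (rule mult_right_mono)
    finally show ?thesis by simp
  qed
  then have "Ad * (Bd + Br) \<le> Bd * (Ad + Ar)"
    using assms(6) by (simp add: distrib_left)
  then show ?thesis
    using \<open>0 < p * Ad\<close> \<open>0 < Bd\<close> assms by (simp add: divide_le_eq le_divide_eq mult.commute)
qed

lemma integral_share_le_of_single_crossing:
  fixes A B :: "real \<Rightarrow> real" and a b d p q :: real
  assumes "A integrable_on {a..b}" "B integrable_on {a..b}" "a \<le> d" "d \<le> b"
    and "\<And>x. x \<in> {a..b} \<Longrightarrow> 0 \<le> A x" "\<And>x. x \<in> {a..b} \<Longrightarrow> 0 \<le> B x"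
    and "0 < p" "0 < q"
    and "\<And>x. x \<in> {a..d} \<Longrightarrow> p * A x \<le> q * B x"
    and "\<And>x. x \<in> {d..b} \<Longrightarrow> q * B x \<le> p * A x"
  shows "integral {a..d} A / integral {a..b} A \<le> integral {a..d} B / integral {a..b} B"
proof -
  have int: "A integrable_on {a..d}" "A integrable_on {d..b}"
    "B integrable_on {a..d}" "B integrable_on {d..b}"
    using assms(1-4) by (auto intro: integrable_subinterval_real)
  have nonneg: "0 \<le> integral {a..d} A" "0 \<le> integral {d..b} A"
    "0 \<le> integral {a..d} B" "0 \<le> integral {d..b} B"
    using int assms(3-6) by (auto intro!: integral_nonneg)
  have "integral {a..d} A / (integral {a..d} A + integral {d..b} A)
      \<le> integral {a..d} B / (integral {a..d} B + integral {d..b} B)"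
  proof (rule share_le_of_single_crossing[OF nonneg assms(7,8)])
    show "p * integral {a..d} A \<le> q * integral {a..d} B"
      using integral_le[OF integrable_cmul[OF int(1)] integrable_cmul[OF int(3)]] assms(9)
      by simp
    show "q * integral {d..b} B \<le> p * integral {d..b} A"
      using integral_le[OF integrable_cmul[OF int(4)] integrable_cmul[OF int(2)]] assms(10)
      by simp
  qed
  then show ?thesis
    using Henstock_Kurzweil_Integration.integral_combine[OF assms(3,4) assms(1)]
      Henstock_Kurzweil_Integration.integral_combine[OF assms(3,4) assms(2)] by simp
qed

lemma integrable_one_minus_powr_weight:
  fixes f :: "real \<Rightarrow> real" and \<alpha> \<beta> :: real
  assumes "(\<lambda>\<theta>. (1 - \<theta> powr \<alpha>) * f \<theta>) integrable_on {0..1}"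
    and "\<And>\<theta>. \<theta> \<in> {0..1} \<Longrightarrow> 0 \<le> f \<theta>" "0 < \<beta>" "\<beta> \<le> \<alpha>"
  shows "(\<lambda>\<theta>. (1 - \<theta> powr \<beta>) * f \<theta>) integrable_on {0..1}"
proof -
  define h where "h \<theta> = (1 - \<theta> powr \<beta>) / (1 - \<theta> powr \<alpha>)" for \<theta> :: real
  have "0 < \<alpha>" using assms by simp
  have lt1: "\<theta> powr \<alpha> < 1" if "\<theta> \<in> {0<..<1}" for \<theta> :: real
    using that powr_less_mono2[of \<alpha> \<theta> 1] \<open>0 < \<alpha>\<close> by simp
  have "continuous_on {0<..<1} h"
    unfolding h_def using lt1 \<open>0 < \<alpha>\<close> \<open>0 < \<beta>\<close>
    by (intro continuous_intros) auto
  then have "h \<in> borel_measurable (lebesgue_on {0<..<1})"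
    by (rule continuous_imp_measurable_on_sets_lebesgue) auto
  moreover have "bounded (h ` {0<..<1})"
  proof -
    have "\<bar>h \<theta>\<bar> \<le> 1" if "\<theta> \<in> {0<..<1}" for \<theta>
      using that lt1[OF that] powr_mono'[of \<beta> \<alpha> \<theta>] powr_le1[of \<beta> \<theta>] assms(3,4)
      by (auto simp: h_def divide_simps)
    then show ?thesis unfolding bounded_iff by (intro exI[of _ 1]) auto
  qed
  moreover have "(\<lambda>\<theta>. (1 - \<theta> powr \<alpha>) * f \<theta>) absolutely_integrable_on {0<..<1}"
    unfolding absolutely_integrable_on_Icc_iff_Ioo[symmetric]
    using assms(1) by (rule nonnegative_absolutely_integrable_1)
      (use assms(2) powr_le1 \<open>0 < \<alpha>\<close> in auto)
  ultimately have "(\<lambda>\<theta>. h \<theta> * ((1 - \<theta> powr \<alpha>) * f \<theta>)) integrable_on {0<..<1}"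
    by (intro set_lebesgue_integral_eq_integral(1)
        absolutely_integrable_bounded_measurable_product_real[where f = h]) auto
  moreover have "h \<theta> * ((1 - \<theta> powr \<alpha>) * f \<theta>) = (1 - \<theta> powr \<beta>) * f \<theta>" if "\<theta> \<in> {0<..<1}" for \<theta>
    using lt1[OF that] by (simp add: h_def)
  ultimately have "(\<lambda>\<theta>. (1 - \<theta> powr \<beta>) * f \<theta>) integrable_on {0<..<1}"
    by (rule integrable_eq)
  then show ?thesis
    by (simp add: integrable_on_Icc_iff_Ioo)
qed

theorem lemma4:
  fixes f :: "real \<Rightarrow> real" and \<delta> \<alpha> \<beta> :: real
  assumes "riemann_integrable_on f 0 1"
    and "\<And>\<theta>. \<theta> \<in> {0..1} \<Longrightarrow> f \<theta> \<ge> 0"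
    and "0 < \<delta>" "\<delta> < 1"
    and "0 < \<beta>" "\<beta> < \<alpha>" "\<alpha> \<le> 1"
    and "integral {0..1} (\<lambda>\<theta>. (1 - \<theta> powr \<alpha>) * f \<theta>) > 0"
  shows "integral {0..\<delta>} (\<lambda>\<theta>. (1 - \<theta> powr \<alpha>) * f \<theta>)
           / integral {0..1} (\<lambda>\<theta>. (1 - \<theta> powr \<alpha>) * f \<theta>)
         \<le> integral {0..\<delta>} (\<lambda>\<theta>. (1 - \<theta> powr \<beta>) * f \<theta>)
           / integral {0..1} (\<lambda>\<theta>. (1 - \<theta> powr \<beta>) * f \<theta>)"
proof (rule integral_share_le_of_single_crossing)
  show int_\<alpha>: "(\<lambda>\<theta>. (1 - \<theta> powr \<alpha>) * f \<theta>) integrable_on {0..1}"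
    using assms(8) not_integrable_integral by fastforce
  show "(\<lambda>\<theta>. (1 - \<theta> powr \<beta>) * f \<theta>) integrable_on {0..1}"
    using integrable_one_minus_powr_weight[OF int_\<alpha>] assms by auto
  show "0 < 1 - \<delta> powr \<beta>" "0 < 1 - \<delta> powr \<alpha>"
    using powr_less_mono2[of \<beta> \<delta> 1] powr_less_mono2[of \<alpha> \<delta> 1] assms by auto
  show "(1 - \<delta> powr \<beta>) * ((1 - \<theta> powr \<alpha>) * f \<theta>) \<le> (1 - \<delta> powr \<alpha>) * ((1 - \<theta> powr \<beta>) * f \<theta>)"
    if "\<theta> \<in> {0..\<delta>}" for \<theta>
    using mult_right_mono[OF one_minus_powr_ratio_cross_le[of \<theta> \<delta> \<beta> \<alpha>] assms(2)[of \<theta>]] that assms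
    by (simp add: algebra_simps)
  show "(1 - \<delta> powr \<alpha>) * ((1 - \<theta> powr \<beta>) * f \<theta>) \<le> (1 - \<delta> powr \<beta>) * ((1 - \<theta> powr \<alpha>) * f \<theta>)"
    if "\<theta> \<in> {\<delta>..1}" for \<theta>
    using mult_right_mono[OF one_minus_powr_ratio_cross_le[of \<delta> \<theta> \<beta> \<alpha>] assms(2)[of \<theta>]] that assms
    by (simp add: algebra_simps)
qed (use assms powr_le1 in auto)

end
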